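(* Let $n,m\ge 2$ and $G\in\mathcal{O}(K_{n,m})$. Then $G$ has the minimum number of edges among all graphs in $\mathcal{O}(K_{n,m})$ if and only if $G$ is a binary star; in this case $|E(G)|=n+m-1$.
   Context: The local complement $c_v(G)$ complements the edges among the neighbours of $v$. $\mathcal{O}(G)$ is the set of all graphs on the labelled vertex set $V(G)$ obtainable from $G$ by finite sequences of local complements. A binary star is a tree consisting of two star graphs whose centers are joined by an edge (equivalently, two adjacent vertices $a,b$ such that every other vertex is adjacent to exactly one of $a,b$ and to nothing else). *)

theory Defs
  imports Main
begin

(* A simple graph on a labelled vertex set V is represented by its edge set,
   a set of 2-element subsets of V. *)

definition nbrs :: "'a set set \<Rightarrow> 'a \<Rightarrow> 'a set" where
  "nbrs E v = {u. {u, v} \<in> E}"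

definition nbr_pairs :: "'a set set \<Rightarrow> 'a \<Rightarrow> 'a set set" where
  "nbr_pairs E v = {{x, y} | x y. x \<in> nbrs E v \<and> y \<in> nbrs E v \<and> x \<noteq> y}"

definition local_compl :: "'a \<Rightarrow> 'a set set \<Rightarrow> 'a set set" where
  "local_compl v E = (E - nbr_pairs E v) \<union> (nbr_pairs E v - E)"

inductive_set lc_orbit :: "'a set \<Rightarrow> 'a set set \<Rightarrow> 'a set set set"
  for V :: "'a set" and E0 :: "'a set set" where
  base: "E0 \<in> lc_orbit V E0"
| step: "E \<in> lc_orbit V E0 \<Longrightarrow> v \<in> V \<Longrightarrow> local_compl v E \<in> lc_orbit V E0"

definition complete_bipartite :: "'a set \<Rightarrow> 'a set \<Rightarrow> 'a set set" where
  "complete_bipartite A B = {{x, y} | x y. x \<in> A \<and> y \<in> B}"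

definition binary_star :: "'a set \<Rightarrow> 'a set set \<Rightarrow> bool" where
  "binary_star V E \<longleftrightarrow> (\<exists>a b S. a \<in> V \<and> b \<in> V \<and> a \<noteq> b \<and> S \<subseteq> V - {a, b} \<and>
      E = insert {a, b} ({{a, x} | x. x \<in> S} \<union> {{b, x} | x. x \<in> V - {a, b} - S}))"

end

theory Submission
  imports Defs
begin

text \<open>
  Local complementation preserves connectivity, so every graph in the orbit of \<open>K(A, B)\<close> has
  at least \<open>|A| + |B| - 1\<close> edges, and for \<open>a \<in> A\<close>, \<open>b \<in> B\<close> the graph
  \<open>c\<^sub>a (c\<^sub>b (c\<^sub>a K(A, B)))\<close> is a binary star attaining this bound. Conversely, a graph of the
  orbit with that many edges is a tree. Local complementation also preserves, for every pair
  \<open>{x, y}\<close>, whether the adjacency matrix over GF(2) between \<open>{x, y}\<close> and the other vertices has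
  rank at most one; in \<open>K(A, B)\<close> this holds exactly for pairs inside one part. In a tree it
  means that one of \<open>x, y\<close> is a leaf attached to the other or both are leaves attached to a
  common vertex. Hence a non-leaf \<open>u\<close> carries all other vertices of its part as leaves, it is
  adjacent to a non-leaf \<open>w\<close> of the other part, which likewise carries the rest of that part,
  and the tree is the binary star with centres \<open>u\<close> and \<open>w\<close>.
\<close>

definition simple_graph :: "'a set \<Rightarrow> 'a set set \<Rightarrow> bool" where
  "simple_graph V E \<longleftrightarrow> (\<forall>e\<in>E. \<exists>x y. x \<noteq> y \<and> x \<in> V \<and> y \<in> V \<and> e = {x, y})"

definition graph_connected :: "'a set \<Rightarrow> 'a set set \<Rightarrow> bool" where
  "graph_connected V E \<longleftrightarrow>
     (\<forall>X \<subseteq> V. X \<noteq> {} \<longrightarrow> X \<noteq> V \<longrightarrow> (\<exists>x\<in>X. \<exists>y\<in>V - X. {x, y} \<in> E))"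

lemma simple_graph_edgeD: "simple_graph V E \<Longrightarrow> {x, y} \<in> E \<Longrightarrow> x \<in> V \<and> y \<in> V \<and> x \<noteq> y"
  unfolding simple_graph_def by (auto simp: doubleton_eq_iff)

lemma simple_graph_edgeE:
  assumes "simple_graph V E" "e \<in> E"
  obtains x y where "e = {x, y}" "x \<in> V" "y \<in> V" "x \<noteq> y"
  using assms unfolding simple_graph_def by blast

lemma simple_graph_subset: "simple_graph V E \<Longrightarrow> F \<subseteq> E \<Longrightarrow> simple_graph V F"
  unfolding simple_graph_def by blast

lemma simple_graph_finite:
  assumes "finite V" "simple_graph V E" shows "finite E"
proof -
  have "E \<subseteq> Pow V" using assms(2) unfolding simple_graph_def by auto
  then show ?thesis using assms(1) by (simp add: finite_subset)
qed

lemma mem_nbrs_iff: "y \<in> nbrs E x \<longleftrightarrow> {x, y} \<in> E"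
  by (simp add: nbrs_def insert_commute)

lemma nbrs_sym: "x \<in> nbrs E y \<longleftrightarrow> y \<in> nbrs E x"
  by (simp add: nbrs_def insert_commute)

lemma local_compl_adj:
  "{u, w} \<in> local_compl v E \<longleftrightarrow> ({u, w} \<in> E) \<noteq> (u \<noteq> w \<and> {u, v} \<in> E \<and> {w, v} \<in> E)"
  unfolding local_compl_def nbr_pairs_def nbrs_def by (auto simp: doubleton_eq_iff)

lemma simple_graph_local_compl:
  assumes "simple_graph V E" shows "simple_graph V (local_compl v E)"
  unfolding simple_graph_def
proof
  fix e assume "e \<in> local_compl v E"
  then have "e \<in> E \<or> e \<in> nbr_pairs E v" unfolding local_compl_def by blast
  then show "\<exists>x y. x \<noteq> y \<and> x \<in> V \<and> y \<in> V \<and> e = {x, y}"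
    using assms simple_graph_edgeD[OF assms] unfolding nbr_pairs_def nbrs_def simple_graph_def
    by blast
qed

lemma graph_connected_local_compl:
  assumes "simple_graph V E" "graph_connected V E" "v \<in> V"
  shows "graph_connected V (local_compl v E)"
  unfolding graph_connected_def
proof (intro allI impI)
  fix X assume X: "X \<subseteq> V" "X \<noteq> {}" "X \<noteq> V"
  then obtain x y where xy: "x \<in> X" "y \<in> V - X" "{x, y} \<in> E"
    using assms(2) unfolding graph_connected_def by blast
  show "\<exists>x\<in>X. \<exists>y\<in>V - X. {x, y} \<in> local_compl v E"
  proof (cases "{x, y} \<in> local_compl v E")
    case True
    then show ?thesis using xy by blast
  next
    case False
    \<comment> \<open>then x and y are both neighbours of v, and v stays adjacent to both\<close>
    then have "{x, v} \<in> E" "{y, v} \<in> E" using xy by (auto simp: local_compl_adj)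
    moreover have "{v, v} \<notin> E" using simple_graph_edgeD[OF assms(1)] by blast
    ultimately have "{x, v} \<in> local_compl v E" "{v, y} \<in> local_compl v E"
      by (auto simp: local_compl_adj insert_commute)
    then show ?thesis using xy assms(3) by (cases "v \<in> X") auto
  qed
qed

section \<open>Cut-rank of a pair of vertices\<close>

text \<open>\<open>a\<close> and \<open>b\<close> are the rows of a matrix over GF(2) with columns indexed by \<open>D\<close>; it has rank
  at most one iff a row vanishes or the two rows coincide.\<close>

definition rank_le_one_on :: "'b set \<Rightarrow> ('b \<Rightarrow> bool) \<Rightarrow> ('b \<Rightarrow> bool) \<Rightarrow> bool" where
  "rank_le_one_on D a b \<longleftrightarrow> (\<forall>z\<in>D. \<not> a z) \<or> (\<forall>z\<in>D. \<not> b z) \<or> (\<forall>z\<in>D. a z = b z)"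

lemma rank_le_one_on_commute: "rank_le_one_on D a b \<longleftrightarrow> rank_le_one_on D b a"
  unfolding rank_le_one_on_def by blast

lemma rank_le_one_on_add_row:
  assumes "\<And>z. z \<in> D \<Longrightarrow> a' z = a z" "\<And>z. z \<in> D \<Longrightarrow> b' z = (b z \<noteq> (c \<and> a z))"
  shows "rank_le_one_on D a' b' \<longleftrightarrow> rank_le_one_on D a b"
  using assms unfolding rank_le_one_on_def by (cases c) (metis (no_types, opaque_lifting))+

text \<open>Right multiplication by the matrix \<open>I + e\<^sub>v s\<^sup>T\<close>, invertible because \<open>s v\<close> is false.\<close>

lemma rank_le_one_on_add_column:
  assumes "v \<in> D" "\<not> s v"
    and "\<And>z. z \<in> D \<Longrightarrow> a' z = (a z \<noteq> (a v \<and> s z))"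
    and "\<And>z. z \<in> D \<Longrightarrow> b' z = (b z \<noteq> (b v \<and> s z))"
  shows "rank_le_one_on D a' b' \<longleftrightarrow> rank_le_one_on D a b"
proof -
  have "a' v = a v" "b' v = b v" using assms by auto
  then show ?thesis using assms unfolding rank_le_one_on_def by metis
qed

text \<open>The cut-rank of \<open>{x, y}\<close>, i.e. the rank of the adjacency matrix between \<open>{x, y}\<close> and
  the remaining vertices, is at most one.\<close>

definition cut_rank_le_one :: "'a set set \<Rightarrow> 'a \<Rightarrow> 'a \<Rightarrow> bool" where
  "cut_rank_le_one E x y \<longleftrightarrow> rank_le_one_on (- {x, y}) (\<lambda>z. {x, z} \<in> E) (\<lambda>z. {y, z} \<in> E)"

lemma cut_rank_le_one_commute: "cut_rank_le_one E x y \<longleftrightarrow> cut_rank_le_one E y x"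
  unfolding cut_rank_le_one_def by (simp add: insert_commute rank_le_one_on_commute)

lemma cut_rank_le_one_local_compl_self:
  assumes "{x, x} \<notin> E"
  shows "cut_rank_le_one (local_compl x E) x y \<longleftrightarrow> cut_rank_le_one E x y"
  unfolding cut_rank_le_one_def
  by (rule rank_le_one_on_add_row[where c = "{y, x} \<in> E"])
     (use assms in \<open>auto simp: local_compl_adj insert_commute\<close>)

text \<open>Local complementation at \<open>x\<close> adds row \<open>x\<close> to row \<open>y\<close> if \<open>x\<close> and \<open>y\<close> are adjacent;
  at any other vertex \<open>v\<close> it adds column \<open>v\<close> to the columns of the neighbours of \<open>v\<close>.\<close>

lemma cut_rank_le_one_local_compl:
  assumes "\<And>w. {w, w} \<notin> E"
  shows "cut_rank_le_one (local_compl v E) x y \<longleftrightarrow> cut_rank_le_one E x y"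
proof -
  consider "v = x" | "v = y" | "v \<notin> {x, y}" by blast
  then show ?thesis
  proof cases
    case 1
    then show ?thesis using cut_rank_le_one_local_compl_self[OF assms] by simp
  next
    case 2
    then show ?thesis
      using cut_rank_le_one_local_compl_self[OF assms] by (metis cut_rank_le_one_commute)
  next
    case 3
    show ?thesis
      unfolding cut_rank_le_one_def
      by (rule rank_le_one_on_add_column[where v = v and s = "\<lambda>z. {z, v} \<in> E"])
         (use 3 assms in \<open>auto simp: local_compl_adj insert_commute\<close>)
  qed
qed

lemma simple_graph_lc_orbit:
  "H \<in> lc_orbit V E0 \<Longrightarrow> simple_graph V E0 \<Longrightarrow> simple_graph V H"
  by (induction rule: lc_orbit.induct) (simp_all add: simple_graph_local_compl)

lemma graph_connected_lc_orbit:
  "H \<in> lc_orbit V E0 \<Longrightarrow> simple_graph V E0 \<Longrightarrow> graph_connected V E0 \<Longrightarrow> graph_connected V H"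
proof (induction rule: lc_orbit.induct)
  case (step E v)
  have "simple_graph V E" using step.hyps(1) step.prems(1) by (rule simple_graph_lc_orbit)
  then show ?case using step.IH[OF step.prems] step.hyps(2) by (rule graph_connected_local_compl)
qed

lemma cut_rank_le_one_lc_orbit:
  "H \<in> lc_orbit V E0 \<Longrightarrow> simple_graph V E0 \<Longrightarrow> cut_rank_le_one H x y \<longleftrightarrow> cut_rank_le_one E0 x y"
proof (induction rule: lc_orbit.induct)
  case (step E v)
  have "simple_graph V E" using step.hyps(1) step.prems by (rule simple_graph_lc_orbit)
  then have "{w, w} \<notin> E" for w using simple_graph_edgeD[of V E w w] by auto
  then show ?case using step.IH[OF step.prems] by (simp add: cut_rank_le_one_local_compl)
qed simp

section \<open>Connected graphs have at least \<open>|V| - 1\<close> edges\<close>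

lemma exists_labelling_constant_on_edges:
  assumes "finite V" "simple_graph V E"
  shows "\<exists>f :: 'a \<Rightarrow> 'a. (\<forall>x y. {x, y} \<in> E \<longrightarrow> f x = f y) \<and> card V \<le> card E + card (f ` V)"
  using simple_graph_finite[OF assms] assms(2)
proof (induction E rule: finite_induct)
  case empty
  show ?case by (rule exI[of _ id]) simp
next
  case (insert e F)
  have "simple_graph V F" using insert.prems by (rule simple_graph_subset) auto
  then obtain f :: "'a \<Rightarrow> 'a" where f: "\<forall>x y. {x, y} \<in> F \<longrightarrow> f x = f y"
      "card V \<le> card F + card (f ` V)"
    using insert.IH by blast
  obtain p q where pq: "e = {p, q}" "p \<in> V" "q \<in> V"
    using simple_graph_edgeE[OF insert.prems insertI1] by metis
  show ?case
  proof (cases "f p = f q")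
    case True
    then have "\<forall>x y. {x, y} \<in> insert e F \<longrightarrow> f x = f y"
      using f(1) pq by (auto simp: doubleton_eq_iff)
    then show ?thesis using f(2) insert.hyps by (intro exI[of _ f]) simp
  next
    case False
    define g where "g z = (if f z = f q then f p else f z)" for z
    have "\<forall>x y. {x, y} \<in> insert e F \<longrightarrow> g x = g y"
      using f(1) pq by (auto simp: g_def doubleton_eq_iff)
    moreover have "g ` V = f ` V - {f q}"
      using pq False by (auto simp: g_def image_iff)
    moreover have "f q \<in> f ` V" using pq(3) by simp
    ultimately show ?thesis
      using f(2) insert.hyps assms(1) by (intro exI[of _ g]) (simp add: card_Diff_singleton)
  qed
qed

lemma card_le_card_edges_if_connected:
  assumes "finite V" "simple_graph V E" "graph_connected V E"
  shows "card V \<le> card E + 1"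
proof (cases "V = {}")
  case False
  then obtain v where v: "v \<in> V" by blast
  obtain f :: "'a \<Rightarrow> 'a" where f: "\<forall>x y. {x, y} \<in> E \<longrightarrow> f x = f y"
      "card V \<le> card E + card (f ` V)"
    using exists_labelling_constant_on_edges[OF assms(1,2)] by blast
  define X where "X = {x \<in> V. f x = f v}"
  have "X = V"
  proof (rule ccontr)
    assume "X \<noteq> V"
    moreover have "X \<subseteq> V" "X \<noteq> {}" using v by (auto simp: X_def)
    ultimately obtain x y where "x \<in> X" "y \<in> V - X" "{x, y} \<in> E"
      using assms(3) unfolding graph_connected_def by blast
    then show False using f(1) by (auto simp: X_def)
  qed
  then have "f ` V = {f v}" using v by (auto simp: X_def)
  then show ?thesis using f(2) by simp
qed simp

lemma walk_crosses_cut: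
  assumes "successively (\<lambda>x y. {x, y} \<in> F) xs" "xs \<noteq> []" "hd xs \<in> X" "last xs \<notin> X"
  shows "\<exists>x\<in>X. \<exists>y. y \<notin> X \<and> {x, y} \<in> F"
  using assms
proof (induction xs rule: induct_list012)
  case (3 x y zs)
  show ?case
  proof (cases "y \<in> X")
    case True
    then show ?thesis using 3 by (auto intro: "3.IH"(1))
  next
    case False
    then show ?thesis using 3 by auto
  qed
qed auto

definition forest :: "'a set set \<Rightarrow> bool" where
  "forest E \<longleftrightarrow>
     (\<forall>p q xs. {p, q} \<in> E \<longrightarrow> \<not> successively (\<lambda>x y. {x, y} \<in> E - {{p, q}}) (p # xs @ [q]))"

lemma graph_connected_Diff_cycle_edge:
  assumes "simple_graph V E" "graph_connected V E"
    and walk: "successively (\<lambda>x y. {x, y} \<in> E - {{p, q}}) (p # xs @ [q])"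
  shows "graph_connected V (E - {{p, q}})"
  unfolding graph_connected_def
proof (intro allI impI)
  fix X assume X: "X \<subseteq> V" "X \<noteq> {}" "X \<noteq> V"
  then obtain x y where xy: "x \<in> X" "y \<in> V - X" "{x, y} \<in> E"
    using assms(2) unfolding graph_connected_def by blast
  have cross: "\<exists>x\<in>X. \<exists>y\<in>V - X. {x, y} \<in> E - {{p, q}}"
    if "successively (\<lambda>x y. {x, y} \<in> E - {{p, q}}) ys" "ys \<noteq> []" "hd ys \<in> X" "last ys \<notin> X"
    for ys
    using walk_crosses_cut[OF that] simple_graph_edgeD[OF assms(1)] by fastforce
  show "\<exists>x\<in>X. \<exists>y\<in>V - X. {x, y} \<in> E - {{p, q}}"
  proof (cases "{x, y} = {p, q}")
    case False
    then show ?thesis using xy by blast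
  next
    case True
    then have "p \<in> X \<and> q \<notin> X \<or> q \<in> X \<and> p \<notin> X" using xy by (auto simp: doubleton_eq_iff)
    have "(\<lambda>x y. {y, x} \<in> E - {{p, q}}) = (\<lambda>x y. {x, y} \<in> E - {{p, q}})"
      by (simp add: insert_commute)
    then have "successively (\<lambda>x y. {x, y} \<in> E - {{p, q}}) (rev (p # xs @ [q]))"
      using walk by (simp only: successively_rev)
    then show ?thesis
      using cross walk \<open>p \<in> X \<and> q \<notin> X \<or> q \<in> X \<and> p \<notin> X\<close>
      by (auto simp del: successively_rev)
  qed
qed

lemma forest_if_connected_card_le:
  assumes "finite V" "simple_graph V E" "graph_connected V E" "card E + 1 \<le> card V"
  shows "forest E"
  unfolding forest_def
proof (intro allI impI notI)
  fix p q xs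
  assume pq: "{p, q} \<in> E" and walk: "successively (\<lambda>x y. {x, y} \<in> E - {{p, q}}) (p # xs @ [q])"
  have "graph_connected V (E - {{p, q}})"
    using assms(2,3) walk by (rule graph_connected_Diff_cycle_edge)
  then have "card V \<le> card (E - {{p, q}}) + 1"
    using assms(1) simple_graph_subset[OF assms(2)] by (intro card_le_card_edges_if_connected) auto
  moreover have "card (E - {{p, q}}) + 1 = card E"
    using pq simple_graph_finite[OF assms(1,2)] card_Diff1_less[of E "{p, q}"] by simp
  ultimately show False using assms(4) by simp
qed

lemma forest_no_triangle:
  assumes "forest E" "simple_graph V E" "{p, q} \<in> E" "{q, r} \<in> E" "{r, p} \<in> E"
  shows False
proof -
  have "q \<noteq> r" "r \<noteq> p" using simple_graph_edgeD[OF assms(2)] assms(4,5) by auto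
  then have "successively (\<lambda>x y. {x, y} \<in> E - {{p, q}}) (p # [r] @ [q])"
    using assms(4,5) by (auto simp: doubleton_eq_iff insert_commute)
  then show False using assms(1,3) unfolding forest_def by blast
qed

lemma forest_no_4cycle:
  assumes "forest E" "simple_graph V E" "{p, q} \<in> E" "{q, r} \<in> E" "{r, s} \<in> E" "{s, p} \<in> E"
    and "p \<noteq> r" "q \<noteq> s"
  shows False
proof -
  have "q \<noteq> r" "s \<noteq> p" using simple_graph_edgeD[OF assms(2)] assms(4,6) by auto
  then have "successively (\<lambda>x y. {x, y} \<in> E - {{p, q}}) (p # [s, r] @ [q])"
    using assms(4-8) by (auto simp: doubleton_eq_iff insert_commute)
  then show False using assms(1,3) unfolding forest_def by blast
qed

lemma complete_bipartite_adj:
  "{x, z} \<in> complete_bipartite A B \<longleftrightarrow> (x \<in> A \<and> z \<in> B) \<or> (x \<in> B \<and> z \<in> A)"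
  unfolding complete_bipartite_def by (auto simp: doubleton_eq_iff)

lemma simple_graph_complete_bipartite:
  assumes "A \<inter> B = {}" shows "simple_graph (A \<union> B) (complete_bipartite A B)"
  unfolding simple_graph_def
proof
  fix e assume "e \<in> complete_bipartite A B"
  then obtain x y where "e = {x, y}" "x \<in> A" "y \<in> B" unfolding complete_bipartite_def by blast
  then show "\<exists>x y. x \<noteq> y \<and> x \<in> A \<union> B \<and> y \<in> A \<union> B \<and> e = {x, y}"
    using assms by (intro exI[of _ x] exI[of _ y]) auto
qed

lemma graph_connected_complete_bipartite:
  assumes "A \<noteq> {}" "B \<noteq> {}"
  shows "graph_connected (A \<union> B) (complete_bipartite A B)"
  unfolding graph_connected_def
proof (intro allI impI)
  fix X assume X: "X \<subseteq> A \<union> B" "X \<noteq> {}" "X \<noteq> A \<union> B"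
  show "\<exists>x\<in>X. \<exists>y\<in>A \<union> B - X. {x, y} \<in> complete_bipartite A B"
  proof (cases "A \<subseteq> X")
    case True
    then obtain b where "b \<in> B - X" using X by blast
    then show ?thesis using True assms(1) by (auto simp: complete_bipartite_adj)
  next
    case False
    then obtain a where a: "a \<in> A - X" by blast
    obtain x where "x \<in> X" using X(2) by blast
    then show ?thesis
    proof (cases "x \<in> A")
      case True
      show ?thesis
      proof (cases "B \<subseteq> X")
        case True
        then show ?thesis using a assms(2) by (auto simp: complete_bipartite_adj)
      next
        case False
        then show ?thesis using \<open>x \<in> X\<close> \<open>x \<in> A\<close> by (auto simp: complete_bipartite_adj)
      qed
    next
      case False
      then show ?thesis using \<open>x \<in> X\<close> X(1) a by (auto simp: complete_bipartite_adj)
    qed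
  qed
qed

lemma obtain_other_element:
  assumes "2 \<le> card A"
  obtains a where "a \<in> A" "a \<noteq> x"
proof -
  have "finite A" "\<not> card A \<le> Suc 0" using assms card.infinite by fastforce+
  then obtain a a' where "a \<in> A" "a' \<in> A" "a \<noteq> a'" using card_le_Suc0_iff_eq by blast
  then show ?thesis using that by blast
qed

lemma cut_rank_le_one_complete_bipartite:
  assumes "A \<inter> B = {}" "2 \<le> card A" "2 \<le> card B" "x \<in> A \<union> B" "y \<in> A \<union> B" "x \<noteq> y"
  shows "cut_rank_le_one (complete_bipartite A B) x y \<longleftrightarrow> (x \<in> A \<longleftrightarrow> y \<in> A)"
proof
  assume rank: "cut_rank_le_one (complete_bipartite A B) x y"
  have sides: False if "x \<in> A" "y \<in> B" "cut_rank_le_one (complete_bipartite A B) x y" for x y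
  proof -
    obtain a where a: "a \<in> A" "a \<noteq> x" using obtain_other_element[OF assms(2)] by blast
    obtain b where b: "b \<in> B" "b \<noteq> y" using obtain_other_element[OF assms(3)] by blast
    have "a \<in> - {x, y}" "b \<in> - {x, y}" using a b that(1,2) assms(1) by auto
    moreover have "{x, b} \<in> complete_bipartite A B" "{y, a} \<in> complete_bipartite A B"
      "{y, b} \<notin> complete_bipartite A B"
      using a b that(1,2) assms(1) by (auto simp: complete_bipartite_adj)
    ultimately show False
      using that(3) unfolding cut_rank_le_one_def rank_le_one_on_def by blast
  qed
  show "x \<in> A \<longleftrightarrow> y \<in> A"
  proof (rule ccontr)
    assume "\<not> (x \<in> A \<longleftrightarrow> y \<in> A)"
    then have "x \<in> A \<and> y \<in> B \<or> y \<in> A \<and> x \<in> B" using assms(4,5) by blast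
    then show False
      using sides rank cut_rank_le_one_commute[of "complete_bipartite A B" x y] by metis
  qed
next
  assume "x \<in> A \<longleftrightarrow> y \<in> A"
  then show "cut_rank_le_one (complete_bipartite A B) x y"
    using assms(1,4,5) unfolding cut_rank_le_one_def rank_le_one_on_def
    by (auto simp: complete_bipartite_adj)
qed

text \<open>Every vertex other than \<open>b\<close> is joined to its centre: \<open>a\<close> for the vertices of \<open>S\<close>,
  \<open>b\<close> for all others, \<open>a\<close> included.\<close>

definition binary_star_edges :: "'a \<Rightarrow> 'a \<Rightarrow> 'a set \<Rightarrow> 'a set \<Rightarrow> 'a set set" where
  "binary_star_edges a b S V = (\<lambda>x. {if x \<in> S then a else b, x}) ` (V - {b})"

lemma binary_star_edges_eq:
  assumes "a \<in> V" "a \<noteq> b" "S \<subseteq> V - {a, b}"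
  shows "binary_star_edges a b S V
    = insert {a, b} ({{a, x} | x. x \<in> S} \<union> {{b, x} | x. x \<in> V - {a, b} - S})"
proof -
  define centre where "centre x = (if x \<in> S then a else b)" for x
  have "V - {b} = insert a (S \<union> (V - {a, b} - S))" using assms by auto
  moreover have "(\<lambda>x. {centre x, x}) ` S = (\<lambda>x. {a, x}) ` S"
    "(\<lambda>x. {centre x, x}) ` (V - {a, b} - S) = (\<lambda>x. {b, x}) ` (V - {a, b} - S)"
    by (auto simp: centre_def)
  moreover have "{centre a, a} = {a, b}" using assms(3) by (auto simp: centre_def)
  ultimately show ?thesis
    unfolding binary_star_edges_def centre_def[symmetric] Setcompr_eq_image
    by (simp only: image_insert image_Un)
qed

lemma binary_star_iff_edges:
  "binary_star V E \<longleftrightarrow>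
     (\<exists>a b S. a \<in> V \<and> b \<in> V \<and> a \<noteq> b \<and> S \<subseteq> V - {a, b} \<and> E = binary_star_edges a b S V)"
proof
  assume "binary_star V E"
  then obtain a b S where "a \<in> V" "b \<in> V" "a \<noteq> b" "S \<subseteq> V - {a, b}"
    "E = insert {a, b} ({{a, x} | x. x \<in> S} \<union> {{b, x} | x. x \<in> V - {a, b} - S})"
    unfolding binary_star_def by blast
  then show "\<exists>a b S. a \<in> V \<and> b \<in> V \<and> a \<noteq> b \<and> S \<subseteq> V - {a, b} \<and> E = binary_star_edges a b S V"
    by (intro exI[of _ a] exI[of _ b] exI[of _ S]) (simp add: binary_star_edges_eq)
next
  assume "\<exists>a b S. a \<in> V \<and> b \<in> V \<and> a \<noteq> b \<and> S \<subseteq> V - {a, b} \<and> E = binary_star_edges a b S V"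
  then obtain a b S where "a \<in> V" "b \<in> V" "a \<noteq> b" "S \<subseteq> V - {a, b}"
    "E = binary_star_edges a b S V"
    by blast
  then show "binary_star V E"
    unfolding binary_star_def by (intro exI[of _ a] exI[of _ b] exI[of _ S]) (simp add: binary_star_edges_eq)
qed

lemma card_binary_star_edges:
  assumes "finite V" "b \<in> V" "a \<noteq> b" "S \<subseteq> V - {a, b}"
  shows "card (binary_star_edges a b S V) = card V - 1"
proof -
  have "inj_on (\<lambda>x. {if x \<in> S then a else b, x}) (V - {b})"
    using assms(3,4) by (auto simp: inj_on_def doubleton_eq_iff split: if_splits)
  then show ?thesis
    unfolding binary_star_edges_def using assms(1,2) by (simp add: card_image)
qed

lemma binary_star_if_leaves:
  assumes "simple_graph V E" "a \<in> V" "b \<in> V" "a \<noteq> b" "S \<subseteq> V - {a, b}" "{a, b} \<in> E"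
    and leaf_a: "\<And>x. x \<in> S \<Longrightarrow> nbrs E x = {a}"
    and leaf_b: "\<And>x. x \<in> V - {a, b} - S \<Longrightarrow> nbrs E x = {b}"
  shows "binary_star V E"
proof -
  define centre where "centre x = (if x \<in> S then a else b)" for x
  have leaf: "nbrs E x = {centre x}" if "x \<in> V - {a, b}" for x
    unfolding centre_def using that leaf_a leaf_b by (cases "x \<in> S") simp_all
  have centre_edge: "y = centre x" if "x \<in> V - {a, b}" "{x, y} \<in> E" for x y
    using leaf[OF that(1)] that(2) mem_nbrs_iff[of y E x] by simp
  have "E = binary_star_edges a b S V"
  proof
    show "E \<subseteq> binary_star_edges a b S V"
    proof
      fix e assume "e \<in> E"
      then obtain p q where e: "e = {p, q}" "p \<in> V" "q \<in> V" "p \<noteq> q"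
        using assms(1) simple_graph_edgeE by metis
      moreover have "centre a = b" using assms(5) unfolding centre_def by auto
      ultimately consider "p \<in> V - {a, b}" | "q \<in> V - {a, b}" | "e = {centre a, a}"
        using assms(4) by (auto simp: doubleton_eq_iff)
      then have "\<exists>x\<in>V - {b}. e = {centre x, x}"
      proof cases
        case 1
        have "q = centre p" using centre_edge[OF 1] \<open>e \<in> E\<close> e(1) by simp
        then show ?thesis using 1 e(1) by (intro bexI[of _ p]) (auto simp: doubleton_eq_iff)
      next
        case 2
        have "p = centre q" using centre_edge[OF 2] \<open>e \<in> E\<close> e(1) by (simp add: insert_commute)
        then show ?thesis using 2 e(1) by (intro bexI[of _ q]) (auto simp: doubleton_eq_iff)
      next
        case 3
        then show ?thesis using assms(2,4) by blast
      qed
      then show "e \<in> binary_star_edges a b S V"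
        unfolding binary_star_edges_def centre_def by blast
    qed
  next
    have "{centre x, x} \<in> E" if "x \<in> V - {b}" for x
    proof (cases "x = a")
      case True
      then show ?thesis using assms(5,6) by (auto simp: centre_def insert_commute)
    next
      case False
      then show ?thesis using that leaf[of x] mem_nbrs_iff[of "centre x" E x] by (simp add: insert_commute)
    qed
    then show "binary_star_edges a b S V \<subseteq> E"
      unfolding binary_star_edges_def centre_def by blast
  qed
  then show ?thesis using assms(2-5) unfolding binary_star_iff_edges by blast
qed

lemma binary_star_local_compl_complete_bipartite:
  assumes "A \<inter> B = {}" "a \<in> A" "b \<in> B"
  shows "binary_star (A \<union> B) (local_compl a (local_compl b (local_compl a (complete_bipartite A B))))"
proof -
  define G1 where "G1 = local_compl a (complete_bipartite A B)"
  define G2 where "G2 = local_compl b G1"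
  define G3 where "G3 = local_compl a G2"
  have G1: "{u, w} \<in> G1 \<longleftrightarrow> u \<noteq> w \<and> (u \<in> A \<and> w \<in> B \<or> u \<in> B \<and> w \<in> A \<or> u \<in> B \<and> w \<in> B)"
    for u w
    unfolding G1_def local_compl_adj complete_bipartite_adj using assms by auto
  have G2: "{u, w} \<in> G2 \<longleftrightarrow> u \<noteq> w \<and> (u = b \<and> w \<in> A \<union> B \<or> w = b \<and> u \<in> A \<union> B \<or> u \<in> A \<and> w \<in> A)"
    for u w
    unfolding G2_def local_compl_adj G1 using assms by auto
  have G3: "{u, w} \<in> G3 \<longleftrightarrow> u \<noteq> w \<and> (u = a \<and> w \<in> A \<or> w = a \<and> u \<in> A
      \<or> u = b \<and> (w \<in> B \<or> w = a) \<or> w = b \<and> (u \<in> B \<or> u = a))"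
    for u w
    unfolding G3_def local_compl_adj G2 using assms by auto
  have "simple_graph (A \<union> B) G3"
    unfolding G3_def G2_def G1_def
    by (intro simple_graph_local_compl simple_graph_complete_bipartite assms(1))
  moreover have "a \<in> A \<union> B" "b \<in> A \<union> B" "a \<noteq> b" "A - {a} \<subseteq> A \<union> B - {a, b}"
    using assms by auto
  moreover have "{a, b} \<in> G3" using assms by (auto simp: G3)
  moreover have "nbrs G3 x = {a}" if "x \<in> A - {a}" for x
    using that assms(1,3) by (auto simp: nbrs_def G3)
  moreover have "nbrs G3 x = {b}" if "x \<in> A \<union> B - {a, b} - (A - {a})" for x
    using that assms(1,2) by (auto simp: nbrs_def G3)
  ultimately have "binary_star (A \<union> B) G3" by (rule binary_star_if_leaves)
  then show ?thesis unfolding G3_def G2_def G1_def .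
qed

section \<open>Trees in which cut-rank one separates two parts\<close>

lemma nbrs_eq_singletonI:
  assumes "simple_graph V E" "nbrs E x \<noteq> {}" "\<forall>z\<in>- {x, y}. {x, z} \<notin> E"
  shows "nbrs E x = {y}"
proof -
  have "z = y" if "z \<in> nbrs E x" for z
    using that assms(1,3) simple_graph_edgeD[of V E x z] by (auto simp: mem_nbrs_iff)
  then show ?thesis using assms(2) by blast
qed

lemma nbrs_eq_singleton_if_true_twins:
  assumes graph: "simple_graph V E" and "forest E" "{x, y} \<in> E"
    and twins: "\<forall>z\<in>- {x, y}. {x, z} \<in> E \<longleftrightarrow> {y, z} \<in> E"
  shows "nbrs E x = {y}"
proof -
  have "z = y" if "z \<in> nbrs E x" for z
  proof (rule ccontr)
    assume "z \<noteq> y"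
    moreover have "z \<noteq> x" using that simple_graph_edgeD[OF graph, of x z] by (auto simp: mem_nbrs_iff)
    ultimately have "{y, z} \<in> E" "{z, x} \<in> E"
      using that twins by (auto simp: mem_nbrs_iff insert_commute)
    then show False using forest_no_triangle[OF assms(2) graph assms(3)] by blast
  qed
  moreover have "y \<in> nbrs E x" using assms(3) by (simp add: mem_nbrs_iff)
  ultimately show ?thesis by blast
qed

lemma leaves_if_false_twins:
  assumes graph: "simple_graph V E" and "forest E" "x \<noteq> y" "{x, y} \<notin> E" "nbrs E x \<noteq> {}"
    and twins: "\<forall>z\<in>- {x, y}. {x, z} \<in> E \<longleftrightarrow> {y, z} \<in> E"
  shows "\<exists>z. nbrs E x = {z} \<and> nbrs E y = {z}"
proof -
  have no_loop: "{w, w} \<notin> E" for w using simple_graph_edgeD[OF graph, of w w] by auto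
  obtain z where z: "z \<in> nbrs E x" using assms(5) by blast
  then have "z \<noteq> x" "z \<noteq> y" using no_loop assms(4) by (auto simp: mem_nbrs_iff)
  then have xz: "{x, z} \<in> E" and yz: "{y, z} \<in> E" using z twins by (auto simp: mem_nbrs_iff)
  have "t = z" if "t \<in> nbrs E x" for t
  proof (rule ccontr)
    assume "t \<noteq> z"
    moreover have "t \<noteq> x" "t \<noteq> y" using that no_loop assms(4) by (auto simp: mem_nbrs_iff)
    ultimately have "{y, t} \<in> E" "{t, x} \<in> E"
      using that twins by (auto simp: mem_nbrs_iff insert_commute)
    moreover have "{z, y} \<in> E" using yz by (simp add: insert_commute)
    ultimately show False
      using forest_no_4cycle[OF assms(2) graph xz] \<open>x \<noteq> y\<close> \<open>t \<noteq> z\<close> by metis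
  qed
  then have x_leaf: "nbrs E x = {z}" using z by blast
  have "t = z" if "t \<in> nbrs E y" for t
  proof -
    have "t \<noteq> x" "t \<noteq> y" using that no_loop assms(4) by (auto simp: mem_nbrs_iff insert_commute)
    then have "t \<in> nbrs E x" using that twins by (auto simp: mem_nbrs_iff)
    then show ?thesis using x_leaf by blast
  qed
  moreover have "z \<in> nbrs E y" using yz by (simp add: mem_nbrs_iff)
  ultimately have "nbrs E y = {z}" by blast
  then show ?thesis using x_leaf by blast
qed

lemma leaf_if_cut_rank_le_one:
  assumes graph: "simple_graph V E" and "forest E" "x \<noteq> y"
    and "nbrs E x \<noteq> {}" "nbrs E y \<noteq> {}" "cut_rank_le_one E x y"
  shows "nbrs E x = {y} \<or> nbrs E y = {x} \<or> (\<exists>z. nbrs E x = {z} \<and> nbrs E y = {z})"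
proof -
  consider "\<forall>z\<in>- {x, y}. {x, z} \<notin> E" | "\<forall>z\<in>- {y, x}. {y, z} \<notin> E"
    | (twins) "\<forall>z\<in>- {x, y}. {x, z} \<in> E \<longleftrightarrow> {y, z} \<in> E"
    using assms(6) unfolding cut_rank_le_one_def rank_le_one_on_def by (auto simp: insert_commute)
  then show ?thesis
  proof cases
    case 1
    then show ?thesis using nbrs_eq_singletonI[OF graph assms(4)] by blast
  next
    case 2
    then show ?thesis using nbrs_eq_singletonI[OF graph assms(5)] by blast
  next
    case twins
    then show ?thesis
      using nbrs_eq_singleton_if_true_twins[OF graph assms(2)]
        leaves_if_false_twins[OF graph assms(2,3) _ assms(4)]
      by blast
  qed
qed

lemma cut_rank_le_one_if_leaf:
  assumes "nbrs E y = {t}" shows "cut_rank_le_one E y t"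
proof -
  have "\<forall>z\<in>- {y, t}. {y, z} \<notin> E" using assms mem_nbrs_iff[of _ E y] by auto
  then show ?thesis unfolding cut_rank_le_one_def rank_le_one_on_def by blast
qed

locale tree_cut_rank_bipartition =
  fixes A B :: "'a set" and E :: "'a set set"
  assumes disjoint: "A \<inter> B = {}" and card_A: "2 \<le> card A" and card_B: "2 \<le> card B"
    and graph: "simple_graph (A \<union> B) E" and connected: "graph_connected (A \<union> B) E"
    and forest: "forest E"
    and cut_rank_iff: "\<And>x y. x \<in> A \<union> B \<Longrightarrow> y \<in> A \<union> B \<Longrightarrow> x \<noteq> y \<Longrightarrow>
      cut_rank_le_one E x y \<longleftrightarrow> (x \<in> A \<longleftrightarrow> y \<in> A)"
begin

lemma not_subset_doubleton: "\<not> A \<union> B \<subseteq> {x, y}"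
proof
  assume "A \<union> B \<subseteq> {x, y}"
  then have "card (A \<union> B) \<le> card {x, y}" by (intro card_mono) simp_all
  also have "\<dots> \<le> 2" by (cases "x = y") simp_all
  finally have "card (A \<union> B) \<le> 2" .
  moreover have "finite A" "finite B" using card_A card_B by (auto intro: card_ge_0_finite)
  then have "card (A \<union> B) = card A + card B" using disjoint by (rule card_Un_disjoint)
  ultimately show False using card_A card_B by linarith
qed

lemma nbrs_nonempty:
  assumes "x \<in> A \<union> B" shows "nbrs E x \<noteq> {}"
proof -
  have "{x} \<noteq> A \<union> B" using not_subset_doubleton[of x x] by auto
  then obtain y where "{x, y} \<in> E"
    using connected[unfolded graph_connected_def, rule_format, of "{x}"] assms by auto
  then show ?thesis by (auto simp: mem_nbrs_iff[symmetric])
qed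

lemma no_mutual_leaves:
  assumes "nbrs E x = {y}" "nbrs E y = {x}"
  shows False
proof -
  have "{x, y} \<in> E" using assms(1) mem_nbrs_iff[of y E x] by simp
  then have "{x, y} \<subseteq> A \<union> B" using simple_graph_edgeD[OF graph] by simp
  then obtain p q where "p \<in> {x, y}" "q \<in> A \<union> B - {x, y}" "{p, q} \<in> E"
    using connected[unfolded graph_connected_def, rule_format, of "{x, y}"]
      not_subset_doubleton[of x y] by auto
  then show False using assms by (auto simp: mem_nbrs_iff[symmetric])
qed

lemma leaf_cases:
  assumes "x \<in> A \<union> B" "y \<in> A \<union> B" "x \<noteq> y" "x \<in> A \<longleftrightarrow> y \<in> A"
  shows "nbrs E x = {y} \<or> nbrs E y = {x} \<or> (\<exists>z. nbrs E x = {z} \<and> nbrs E y = {z})"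
proof (rule leaf_if_cut_rank_le_one[OF graph forest assms(3)])
  show "nbrs E x \<noteq> {}" "nbrs E y \<noteq> {}" using nbrs_nonempty assms(1,2) by simp_all
  show "cut_rank_le_one E x y" using cut_rank_iff[OF assms(1-3)] assms(4) by simp
qed

lemma same_side_iff_leaf:
  assumes "t \<in> A \<union> B" "\<forall>z. nbrs E t \<noteq> {z}" "y \<in> A \<union> B" "y \<noteq> t"
  shows "(y \<in> A \<longleftrightarrow> t \<in> A) \<longleftrightarrow> nbrs E y = {t}"
proof
  assume "y \<in> A \<longleftrightarrow> t \<in> A"
  then show "nbrs E y = {t}" using leaf_cases[OF assms(3,1,4)] assms(2) by blast
next
  assume "nbrs E y = {t}"
  then have "cut_rank_le_one E y t" by (rule cut_rank_le_one_if_leaf)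
  then show "y \<in> A \<longleftrightarrow> t \<in> A" using cut_rank_iff[OF assms(3,1,4)] by simp
qed

lemma exists_non_leaf: "\<exists>u \<in> A \<union> B. \<forall>z. nbrs E u \<noteq> {z}"
proof (rule ccontr)
  assume "\<not> ?thesis"
  then have leaf: "\<exists>z. nbrs E u = {z}" if "u \<in> A \<union> B" for u using that by blast
  obtain x where "x \<in> A \<union> B" using obtain_other_element[OF card_A] by blast
  then obtain y where xy: "nbrs E x = {y}" using leaf by blast
  then have "{x, y} \<in> E" using mem_nbrs_iff[of y E x] by simp
  then have "y \<in> A \<union> B" using simple_graph_edgeD[OF graph] by simp
  then obtain t where "nbrs E y = {t}" using leaf by blast
  moreover have "x \<in> nbrs E y" using \<open>{x, y} \<in> E\<close> by (simp add: mem_nbrs_iff insert_commute)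
  ultimately have "nbrs E y = {x}" by auto
  then show False using no_mutual_leaves[OF xy] by simp
qed

lemma obtain_same_side:
  assumes "x \<in> A \<union> B"
  obtains y where "y \<in> A \<union> B" "y \<noteq> x" "y \<in> A \<longleftrightarrow> x \<in> A"
proof (cases "x \<in> A")
  case True
  then show ?thesis using obtain_other_element[OF card_A, of x] that by blast
next
  case False
  obtain y where "y \<in> B" "y \<noteq> x" using obtain_other_element[OF card_B] by blast
  then show ?thesis using False disjoint that by blast
qed

lemma obtain_other_side:
  obtains y where "y \<in> A \<union> B" "y \<in> A \<longleftrightarrow> x \<notin> A"
proof (cases "x \<in> A")
  case True
  obtain y where "y \<in> B" using obtain_other_element[OF card_B] by blast
  then show ?thesis using True disjoint that by blast
next
  case False
  obtain y where "y \<in> A" using obtain_other_element[OF card_A] by blast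
  then show ?thesis using False that by blast
qed

lemma exists_nbr_other_side:
  assumes u: "u \<in> A \<union> B" "\<forall>z. nbrs E u \<noteq> {z}"
  obtains w where "w \<in> A \<union> B" "w \<in> A \<longleftrightarrow> u \<notin> A" "{u, w} \<in> E"
proof -
  define P where "P = {x \<in> A \<union> B. x \<in> A \<longleftrightarrow> u \<in> A}"
  obtain v where "v \<in> A \<union> B" "v \<in> A \<longleftrightarrow> u \<notin> A" by (rule obtain_other_side)
  then have "P \<noteq> A \<union> B" by (auto simp: P_def)
  moreover have "P \<subseteq> A \<union> B" "P \<noteq> {}" using u(1) by (auto simp: P_def)
  ultimately obtain x w where xw: "x \<in> P" "w \<in> A \<union> B - P" "{x, w} \<in> E"
    using connected[unfolded graph_connected_def, rule_format, of P] by blast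
  have "x = u"
  proof (rule ccontr)
    assume "x \<noteq> u"
    then have "nbrs E x = {u}" using xw(1) same_side_iff_leaf[OF u, of x] by (auto simp: P_def)
    moreover have "w \<in> nbrs E x" using xw(3) by (simp add: mem_nbrs_iff)
    ultimately have "w = u" by simp
    then show False using xw(2) u(1) by (simp add: P_def)
  qed
  then show ?thesis using that xw(2,3) by (auto simp: P_def)
qed

lemma non_leaf_if_nbr_other_side:
  assumes u: "u \<in> A \<union> B" "\<forall>z. nbrs E u \<noteq> {z}"
    and w: "w \<in> A \<union> B" "w \<in> A \<longleftrightarrow> u \<notin> A" "{u, w} \<in> E"
  shows "\<forall>z. nbrs E w \<noteq> {z}"
proof (intro allI notI)
  fix z assume "nbrs E w = {z}"
  moreover have "u \<in> nbrs E w" using w(3) by (simp add: mem_nbrs_iff insert_commute)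
  ultimately have w_leaf: "nbrs E w = {u}" by simp
  obtain y where y: "y \<in> A \<union> B" "y \<noteq> w" "y \<in> A \<longleftrightarrow> w \<in> A"
    using obtain_same_side[OF w(1)] by blast
  then have "y \<noteq> u" using w(2) by auto
  consider "nbrs E y = {w}" | "nbrs E w = {y}" | z' where "nbrs E y = {z'}" "nbrs E w = {z'}"
    using leaf_cases[OF y(1) w(1) y(2,3)] by blast
  then show False
  proof cases
    case 1
    then have "y \<in> nbrs E w" using nbrs_sym[of y E w] by simp
    then show False using w_leaf \<open>y \<noteq> u\<close> by simp
  next
    case 2
    then show False using w_leaf \<open>y \<noteq> u\<close> by simp
  next
    case 3
    then have "nbrs E y = {u}" using w_leaf by simp
    then show False using same_side_iff_leaf[OF u y(1) \<open>y \<noteq> u\<close>] y(3) w(2) by simp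
  qed
qed

theorem binary_star: "binary_star (A \<union> B) E"
proof -
  obtain u where u: "u \<in> A \<union> B" "\<forall>z. nbrs E u \<noteq> {z}" using exists_non_leaf by blast
  then obtain w where w: "w \<in> A \<union> B" "w \<in> A \<longleftrightarrow> u \<notin> A" "{u, w} \<in> E"
    by (rule exists_nbr_other_side)
  have w_non_leaf: "\<forall>z. nbrs E w \<noteq> {z}" using u w by (rule non_leaf_if_nbr_other_side)
  define S where "S = {x \<in> A \<union> B - {u}. x \<in> A \<longleftrightarrow> u \<in> A}"
  show ?thesis
  proof (rule binary_star_if_leaves[OF graph u(1) w(1) _ _ w(3)])
    show "u \<noteq> w" "S \<subseteq> A \<union> B - {u, w}" using w(2) by (auto simp: S_def)
    show "nbrs E x = {u}" if "x \<in> S" for x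
      using that same_side_iff_leaf[OF u] by (auto simp: S_def)
    show "nbrs E x = {w}" if "x \<in> A \<union> B - {u, w} - S" for x
      using that same_side_iff_leaf[OF w(1) w_non_leaf] w(2) by (auto simp: S_def)
  qed
qed

end

lemma card_lc_orbit_ge:
  assumes "finite V" "simple_graph V E0" "graph_connected V E0" "H \<in> lc_orbit V E0"
  shows "card V - 1 \<le> card H"
  using card_le_card_edges_if_connected[OF assms(1)] simple_graph_lc_orbit[OF assms(4,2)]
    graph_connected_lc_orbit[OF assms(4,2,3)] by fastforce

lemma card_binary_star:
  assumes "finite V" "binary_star V E" shows "card E = card V - 1"
  using assms(2) card_binary_star_edges[OF assms(1)] unfolding binary_star_iff_edges by auto

lemma binary_star_in_lc_orbit_complete_bipartite:
  assumes "A \<inter> B = {}" "A \<noteq> {}" "B \<noteq> {}"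
  obtains H where "H \<in> lc_orbit (A \<union> B) (complete_bipartite A B)" "binary_star (A \<union> B) H"
proof -
  obtain a b where "a \<in> A" "b \<in> B" using assms(2,3) by blast
  then show ?thesis
    using that binary_star_local_compl_complete_bipartite[OF assms(1)]
    by (meson UnI1 UnI2 lc_orbit.base lc_orbit.step)
qed

lemma binary_star_if_tree_in_lc_orbit:
  assumes "A \<inter> B = {}" "2 \<le> card A" "2 \<le> card B"
    and G: "G \<in> lc_orbit (A \<union> B) (complete_bipartite A B)"
    and "card G + 1 \<le> card (A \<union> B)"
  shows "binary_star (A \<union> B) G"
proof -
  have "A \<noteq> {}" "B \<noteq> {}" "finite (A \<union> B)" using assms(2,3) card.infinite by fastforce+
  then have K: "simple_graph (A \<union> B) (complete_bipartite A B)"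
    "graph_connected (A \<union> B) (complete_bipartite A B)"
    using assms(1) by (auto intro: simple_graph_complete_bipartite graph_connected_complete_bipartite)
  have "tree_cut_rank_bipartition A B G"
  proof
    show "simple_graph (A \<union> B) G" using G K(1) by (rule simple_graph_lc_orbit)
    show "graph_connected (A \<union> B) G" using G K by (rule graph_connected_lc_orbit)
    then show "forest G" using \<open>finite (A \<union> B)\<close> \<open>simple_graph (A \<union> B) G\<close> assms(5)
      by (intro forest_if_connected_card_le)
    show "cut_rank_le_one G x y \<longleftrightarrow> (x \<in> A \<longleftrightarrow> y \<in> A)"
      if "x \<in> A \<union> B" "y \<in> A \<union> B" "x \<noteq> y" for x y
      using cut_rank_le_one_lc_orbit[OF G K(1)] cut_rank_le_one_complete_bipartite[OF assms(1-3) that]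
      by simp
  qed (use assms(1-3) in auto)
  then show ?thesis by (rule tree_cut_rank_bipartition.binary_star)
qed

theorem theorem5:
  fixes A B :: "'a set" and n m :: nat and G :: "'a set set"
  assumes "finite A" and "finite B" and "A \<inter> B = {}"
    and "card A = n" and "card B = m" and "n \<ge> 2" and "m \<ge> 2"
    and "G \<in> lc_orbit (A \<union> B) (complete_bipartite A B)"
  shows "((\<forall>H \<in> lc_orbit (A \<union> B) (complete_bipartite A B). card G \<le> card H)
            \<longleftrightarrow> binary_star (A \<union> B) G)
         \<and> (binary_star (A \<union> B) G \<longrightarrow> card G = n + m - 1)"
proof -
  have fin: "finite (A \<union> B)" and card_V: "card (A \<union> B) = n + m"
    using assms(1-5) card_Un_disjoint by auto
  have "A \<noteq> {}" "B \<noteq> {}" using assms(4-7) by auto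
  then have K: "simple_graph (A \<union> B) (complete_bipartite A B)"
    "graph_connected (A \<union> B) (complete_bipartite A B)"
    using assms(3) by (auto intro: simple_graph_complete_bipartite graph_connected_complete_bipartite)
  obtain S where S: "S \<in> lc_orbit (A \<union> B) (complete_bipartite A B)" "binary_star (A \<union> B) S"
    using binary_star_in_lc_orbit_complete_bipartite[OF assms(3) \<open>A \<noteq> {}\<close> \<open>B \<noteq> {}\<close>] .
  have star_card: "card H = n + m - 1" if "binary_star (A \<union> B) H" for H
    using card_binary_star[OF fin that] card_V by simp
  have "binary_star (A \<union> B) G" if "\<forall>H \<in> lc_orbit (A \<union> B) (complete_bipartite A B). card G \<le> card H"
  proof (rule binary_star_if_tree_in_lc_orbit[OF assms(3) _ _ assms(8)])
    have "card G \<le> card S" using that S(1) by blast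
    then show "card G + 1 \<le> card (A \<union> B)" using star_card[OF S(2)] card_V assms(6) by linarith
  qed (use assms(4-7) in auto)
  moreover have "card G \<le> card H" if "binary_star (A \<union> B) G" "H \<in> lc_orbit (A \<union> B) (complete_bipartite A B)" for H
    using star_card[OF that(1)] card_lc_orbit_ge[OF fin K that(2)] card_V by simp
  ultimately show ?thesis using star_card by blast
qed

end
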